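(* Let $\gamma>\frac d2$, $T>0$, $\tau>0$, $n\ge0$ with $t_n\le T$ where $t_n=n\tau$. Let $u$ solve $i\partial_tu+\Delta u+|u|^2u=0$ on $[0,T]\times\mathbb T^d$, let $v(t)=\mathrm e^{-it\Delta}u(t)$, and assume $v\in L^\infty((0,T);H^{\gamma+2}(\mathbb T^d))$. Define $\mathcal R_5^n(v)$ through its Fourier coefficients $$\widehat{\mathcal R_5^n(v)}(\boldsymbol\xi)=\sum_{\substack{\boldsymbol\xi_1,\boldsymbol\xi_2,\boldsymbol\xi_3\in\mathbb Z^d\\ \boldsymbol\xi_1+\boldsymbol\xi_2+\boldsymbol\xi_3=\boldsymbol\xi}}\mathcal R_2(\alpha,\beta,\tau)\,\mathrm e^{it_n\phi_3}\,\hat{\bar v}(t_n,\boldsymbol\xi_1)\hat v(t_n,\boldsymbol\xi_2)\hat v(t_n,\boldsymbol\xi_3),$$ where $\phi_3=|\boldsymbol\xi|^2+|\boldsymbol\xi_1|^2-|\boldsymbol\xi_2|^2-|\boldsymbol\xi_3|^2$, $\alpha=2|\boldsymbol\xi_1|^2$, $\beta=2\boldsymbol\xi_1\cdot\boldsymbol\xi_2+2\boldsymbol\xi_1\cdot\boldsymbol\xi_3+2\boldsymbol\xi_2\cdot\boldsymbol\xi_3$, and $$\mathcal R_2(\alpha,\beta,\tau)=\int_0^\tau\mathrm e^{is(\alpha+\beta)}ds-\tau\varphi(i\tau\alpha)+\tau\big(\mathrm e^{i\tau\beta}-1\big)\psi(i\tau\alpha).$$ Then $\|\mathcal R_5^n(v)\|_{H^\gamma}\le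 C\tau^3\|v\|^3_{L^\infty((0,T);H^{\gamma+2})}$ with $C$ independent of $\tau,n$.
   Context: $\mathbb T=(0,2\pi)$ periodic; $\hat f(\boldsymbol\xi)=(2\pi)^{-d}\int_{\mathbb T^d}\mathrm e^{-i\boldsymbol x\cdot\boldsymbol\xi}f(\boldsymbol x)d\boldsymbol x$, and $\hat{\bar v}$ denotes the Fourier coefficients of $\overline{v}$. $\mathrm e^{it\Delta}$ multiplies the $\boldsymbol\xi$-th Fourier coefficient by $\mathrm e^{-it|\boldsymbol\xi|^2}$. $\varphi(z)=\frac{e^z-1}{z}$ ($z\neq0$), $\varphi(0)=1$; $\psi(z)=\frac{e^z-1-ze^z}{z^2}$ ($z\neq0$), $\psi(0)=-\frac12$. $\|f\|_{H^s}=\|(1-\Delta)^{s/2}f\|_{L^2}$. *)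

theory Defs
  imports "HOL-Analysis.Analysis" "HOL-Probability.Essential_Supremum"
begin

text \<open>Functions on the torus T^d are represented by their Fourier coefficients
  c :: int^'d => complex, with hat f(xi) = (2 pi)^(-d) int e^(-i x.xi) f(x) dx.\<close>

definition idot :: "int^'d \<Rightarrow> int^'d \<Rightarrow> int" where
  "idot x y = (\<Sum>i\<in>UNIV. x$i * y$i)"

definition nsq :: "int^'d \<Rightarrow> int" where
  "nsq x = idot x x"

definition phi :: "complex \<Rightarrow> complex" where
  "phi z = (if z = 0 then 1 else (exp z - 1) / z)"

definition psi :: "complex \<Rightarrow> complex" where
  "psi z = (if z = 0 then - 1/2 else (exp z - 1 - z * exp z) / z^2)"

definition hs_weight :: "real \<Rightarrow> int^'d \<Rightarrow> real" where
  "hs_weight s \<xi> = (1 + real_of_int (nsq \<xi>)) powr s"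

definition in_Hs :: "real \<Rightarrow> (int^'d \<Rightarrow> complex) \<Rightarrow> bool" where
  "in_Hs s c \<longleftrightarrow> (\<lambda>\<xi>. hs_weight s \<xi> * (cmod (c \<xi>))^2) summable_on UNIV"

text \<open>||f||_{H^s} = ||(1-Delta)^{s/2} f||_{L^2(T^d)}, via Parseval:
  ||f||_{L^2}^2 = (2 pi)^d sum |hat f|^2.\<close>
definition hs_norm :: "real \<Rightarrow> (int^'d \<Rightarrow> complex) \<Rightarrow> real" where
  "hs_norm s c = sqrt ((2*pi)^CARD('d) * (\<Sum>\<^sub>\<infinity>\<xi>. hs_weight s \<xi> * (cmod (c \<xi>))^2))"

text \<open>Fourier coefficients of the complex conjugate: hat(bar f)(xi) = conj(hat f(-xi))\<close>
definition conj_coeff :: "(int^'d \<Rightarrow> complex) \<Rightarrow> int^'d \<Rightarrow> complex" where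
  "conj_coeff c \<xi> = cnj (c (- \<xi>))"

text \<open>Fourier coefficients of |f|^2 f = bar f * f * f\<close>
definition cubic_nl :: "(int^'d \<Rightarrow> complex) \<Rightarrow> int^'d \<Rightarrow> complex" where
  "cubic_nl c \<xi> = (\<Sum>\<^sub>\<infinity>(\<xi>1, \<xi>2) \<in> UNIV. conj_coeff c \<xi>1 * c \<xi>2 * c (\<xi> - \<xi>1 - \<xi>2))"

text \<open>u solves i u_t + Delta u + |u|^2 u = 0 on [0,T] x T^d (Fourier side,
  each coefficient differentiable in time)\<close>
definition nls_solution :: "real \<Rightarrow> (real \<Rightarrow> int^'d \<Rightarrow> complex) \<Rightarrow> bool" where
  "nls_solution T u \<longleftrightarrow> (\<forall>\<xi>. \<forall>t\<in>{0..T}. \<exists>D.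
      ((\<lambda>s. u s \<xi>) has_vector_derivative D) (at t within {0..T}) \<and>
      \<i> * D - of_int (nsq \<xi>) * u t \<xi> + cubic_nl (u t) \<xi> = 0)"

definition Linf_mem :: "real \<Rightarrow> real \<Rightarrow> (real \<Rightarrow> int^'d \<Rightarrow> complex) \<Rightarrow> bool" where
  "Linf_mem T s v \<longleftrightarrow>
     (AE t in restrict_space lborel {0<..<T}. in_Hs s (v t)) \<and>
     esssup (restrict_space lborel {0<..<T}) (\<lambda>t. ereal (hs_norm s (v t))) < \<infinity>"

definition Linf_norm :: "real \<Rightarrow> real \<Rightarrow> (real \<Rightarrow> int^'d \<Rightarrow> complex) \<Rightarrow> real" where
  "Linf_norm T s v =
     real_of_ereal (esssup (restrict_space lborel {0<..<T}) (\<lambda>t. ereal (hs_norm s (v t))))"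

definition R2 :: "real \<Rightarrow> real \<Rightarrow> real \<Rightarrow> complex" where
  "R2 \<alpha> \<beta> \<tau> =
     integral {0..\<tau>} (\<lambda>s. exp (\<i> * of_real (s * (\<alpha> + \<beta>))))
     - of_real \<tau> * phi (\<i> * of_real (\<tau> * \<alpha>))
     + of_real \<tau> * (exp (\<i> * of_real (\<tau> * \<beta>)) - 1) * psi (\<i> * of_real (\<tau> * \<alpha>))"

definition R5 :: "real \<Rightarrow> nat \<Rightarrow> (real \<Rightarrow> int^'d \<Rightarrow> complex) \<Rightarrow> int^'d \<Rightarrow> complex" where
  "R5 \<tau> n v \<xi> = (\<Sum>\<^sub>\<infinity>(\<xi>1, \<xi>2) \<in> UNIV.
     (let \<xi>3 = \<xi> - \<xi>1 - \<xi>2;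
          tn = real n * \<tau>;
          \<phi>3 = nsq \<xi> + nsq \<xi>1 - nsq \<xi>2 - nsq \<xi>3;
          \<alpha> = 2 * nsq \<xi>1;
          \<beta> = 2 * idot \<xi>1 \<xi>2 + 2 * idot \<xi>1 \<xi>3 + 2 * idot \<xi>2 \<xi>3
      in R2 (real_of_int \<alpha>) (real_of_int \<beta>) \<tau> * exp (\<i> * of_real (tn * real_of_int \<phi>3))
         * conj_coeff (v tn) \<xi>1 * v tn \<xi>2 * v tn \<xi>3))"

end

theory Submission
  imports Defs "HOL-Probability.Characteristic_Functions"
begin

text \<open>Each term of \<open>R\<^sub>5\<close> carries the kernel \<open>R\<^sub>2(\<alpha>,\<beta>,\<tau>)\<close>, which is what remains of
  \<open>\<integral>\<^sub>0\<^sup>\<tau> e\<^sup>i\<^sup>s\<^sup>(\<^sup>\<alpha>\<^sup>+\<^sup>\<beta>\<^sup>) ds\<close> after its terms of order \<open>0\<close> and \<open>1\<close> in \<open>\<beta>\<close> are removed; hence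
  \<open>|R\<^sub>2| \<le> \<tau>\<^sup>3\<beta>\<^sup>2/2\<close>. Since \<open>\<beta>\<^sup>2 \<le> 36\<langle>\<xi>\<^sub>1\<rangle>\<^sup>2\<langle>\<xi>\<^sub>2\<rangle>\<^sup>2\<langle>\<xi>\<^sub>3\<rangle>\<^sup>2\<close>, the two derivatives lost in
  \<open>\<beta>\<^sup>2\<close> are paid by the \<open>H\<^sup>\<gamma>\<^sup>+\<^sup>2\<close> regularity of \<open>v\<close>: \<open>|R\<^sub>5|\<close> is bounded coefficientwise by
  \<open>18\<tau>\<^sup>3\<close> times the trilinear convolution of three sequences whose \<open>H\<^sup>\<gamma>\<close> norms are
  \<open>\<parallel>v(t\<^sub>n)\<parallel>\<^sub>H\<^sub>\<gamma>\<^sub>+\<^sub>2\<close>. For \<open>\<gamma> > d/2\<close> this convolution is estimated as in the proof that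
  \<open>H\<^sup>\<gamma>\<close> is an algebra: split \<open>\<langle>\<xi>\<rangle>\<^sup>\<gamma> \<le> 3\<^sup>\<gamma> \<Sum>\<^sub>j \<langle>\<xi>\<^sub>j\<rangle>\<^sup>\<gamma>\<close>, apply Young's inequality
  \<open>\<ell>\<^sup>2 * \<ell>\<^sup>1 * \<ell>\<^sup>1 \<subseteq> \<ell>\<^sup>2\<close>, and bound the \<open>\<ell>\<^sup>1\<close> norms by Cauchy--Schwarz against
  \<open>\<Sum>\<langle>\<xi>\<rangle>\<^sup>-\<^sup>2\<^sup>\<gamma> < \<infinity>\<close>. Finally, the value at the single time \<open>t\<^sub>n\<close> is controlled by the
  essential supremum over \<open>(0,T)\<close> because the Fourier coefficients of a solution are continuous
  in time.\<close>

section \<open>The kernel \<open>R\<^sub>2\<close>\<close>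

lemma has_integral_norm_le:
  fixes f :: "'n::euclidean_space \<Rightarrow> 'a::banach" and g :: "'n \<Rightarrow> real"
  assumes "(f has_integral i) S" "(g has_integral j) S" "\<And>x. x \<in> S \<Longrightarrow> norm (f x) \<le> g x"
  shows "norm i \<le> j"
  using has_integral_norm_bound_integral_component[OF assms(1,2), of 1] assms(3) by simp

lemma has_vector_derivative_iexp_scaled:
  "((\<lambda>s. iexp (s * a)) has_vector_derivative \<i> * of_real a * iexp (s * a)) (at s within S)"
proof -
  have "((\<lambda>z. exp (\<i> * (z * of_real a))) has_field_derivative \<i> * of_real a * exp (\<i> * (of_real s * of_real a)))
      (at (of_real s))"
    by (auto intro!: derivative_eq_intros)
  from has_vector_derivative_real_field[OF this] show ?thesis by simp
qed

lemma has_integral_iexp_scaled: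
  assumes "0 \<le> \<tau>"
  shows "((\<lambda>s. iexp (s * a)) has_integral of_real \<tau> * phi (\<i> * of_real (\<tau> * a))) {0..\<tau>}"
proof (cases "a = 0")
  case True
  have "((\<lambda>s::real. of_real s :: complex) has_vector_derivative 1) (at s within {0..\<tau>})" for s
    by (auto intro!: derivative_eq_intros)
  from fundamental_theorem_of_calculus[OF assms this] show ?thesis
    using True by (simp add: phi_def)
next
  case False
  define G where "G s = iexp (s * a) / (\<i> * of_real a)" for s
  have "(G has_vector_derivative iexp (s * a)) (at s within {0..\<tau>})" for s
    unfolding G_def
    by (rule has_vector_derivative_eq_rhs, rule has_vector_derivative_divide,
        rule has_vector_derivative_iexp_scaled) (use False in auto)
  from fundamental_theorem_of_calculus[OF assms this]
  have "((\<lambda>s. iexp (s * a)) has_integral G \<tau> - G 0) {0..\<tau>}" by simp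
  moreover have "G \<tau> - G 0 = of_real \<tau> * phi (\<i> * of_real (\<tau> * a))"
    using False unfolding G_def phi_def by (cases "\<tau> = 0") (auto simp: field_simps)
  ultimately show ?thesis by simp
qed

lemma has_integral_times_iexp_scaled:
  assumes "0 \<le> \<tau>"
  shows "((\<lambda>s. of_real s * iexp (s * a)) has_integral - (of_real \<tau>)\<^sup>2 * psi (\<i> * of_real (\<tau> * a))) {0..\<tau>}"
proof (cases "a = 0")
  case True
  have "((\<lambda>z::complex. z\<^sup>2 / 2) has_field_derivative of_real s) (at (of_real s))" for s
    by (auto intro!: derivative_eq_intros)
  from has_vector_derivative_real_field[OF this]
  have "((\<lambda>s::real. of_real (s\<^sup>2 / 2) :: complex) has_vector_derivative of_real s) (at s within {0..\<tau>})" for s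
    by simp
  from fundamental_theorem_of_calculus[OF assms this] show ?thesis
    using True by (simp add: psi_def power2_eq_square)
next
  case False
  define A where "A = (of_real a :: complex)"
  have A: "A \<noteq> 0" using False by (simp add: A_def)
  define G where "G z = exp (\<i> * (z * A)) * (\<i> * z * A - 1) / (\<i> * A)\<^sup>2" for z
  have "(G has_field_derivative of_real s * exp (\<i> * (of_real s * A))) (at (of_real s))" for s
    unfolding G_def
    apply (rule DERIV_cong)
     apply (rule derivative_eq_intros refl)+
    using A by (auto simp: field_simps power2_eq_square)
  from has_vector_derivative_real_field[OF this]
  have "((\<lambda>s. G (of_real s)) has_vector_derivative of_real s * iexp (s * a)) (at s within {0..\<tau>})" for s
    by (simp add: A_def)
  from fundamental_theorem_of_calculus[OF assms this]
  have "((\<lambda>s. of_real s * iexp (s * a)) has_integral G (of_real \<tau>) - G 0) {0..\<tau>}"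
    by simp
  moreover have "G (of_real \<tau>) - G 0 = - (of_real \<tau>)\<^sup>2 * psi (\<i> * of_real (\<tau> * a))"
    using A unfolding G_def psi_def A_def by (cases "\<tau> = 0") (auto simp: field_simps power2_eq_square)
  ultimately show ?thesis by simp
qed

lemma norm_psi_i_le: "cmod (psi (\<i> * of_real x)) \<le> 1/2"
proof -
  have "((\<lambda>s::real. s\<^sup>2 / 2) has_vector_derivative s) (at s within {0..1})" for s
    unfolding has_real_derivative_iff_has_vector_derivative[symmetric]
    by (auto intro!: derivative_eq_intros)
  from fundamental_theorem_of_calculus[OF _ this] have "((\<lambda>s::real. s) has_integral 1/2) {0..1}"
    by simp
  from has_integral_norm_le[OF has_integral_times_iexp_scaled[of 1 x] this] show ?thesis
    by (simp add: norm_mult)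
qed

lemma norm_iexp_sub_taylor1_le: "cmod (iexp x - 1 - \<i> * of_real x) \<le> x\<^sup>2 / 2"
  using iexp_approx1[of x 1] by (simp add: power2_eq_square diff_diff_eq)

text \<open>Expanding \<open>e\<^sup>i\<^sup>s\<^sup>\<beta> = 1 + is\<beta> + \<dots>\<close> under the integral, the zeroth-order term is \<open>\<tau>\<phi>(i\<tau>\<alpha>)\<close> and
  the first-order term \<open>i\<beta>\<integral>\<^sub>0\<^sup>\<tau> s e\<^sup>i\<^sup>s\<^sup>\<alpha> ds = -i\<beta>\<tau>\<^sup>2\<psi>(i\<tau>\<alpha>)\<close> cancels the correction term of \<open>R2\<close> up to
  another Taylor remainder.\<close>
lemma R2_eq_taylor_remainders:
  assumes "0 \<le> \<tau>"
  shows "R2 a b \<tau> = integral {0..\<tau>} (\<lambda>s. iexp (s * a) * (iexp (s * b) - 1 - \<i> * of_real (s * b)))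
                    + of_real \<tau> * psi (\<i> * of_real (\<tau> * a)) * (iexp (\<tau> * b) - 1 - \<i> * of_real (\<tau> * b))"
proof -
  define g where "g s = iexp (s * a) * (iexp (s * b) - 1 - \<i> * of_real (s * b))" for s
  have g: "g integrable_on {0..\<tau>}"
    unfolding g_def by (intro integrable_continuous_real continuous_intros)
  have "iexp (s * (a + b)) = g s + iexp (s * a) + \<i> * of_real b * (of_real s * iexp (s * a))" for s
    unfolding g_def by (simp add: algebra_simps exp_add[symmetric])
  then have "((\<lambda>s. iexp (s * (a + b))) has_integral integral {0..\<tau>} g + of_real \<tau> * phi (\<i> * of_real (\<tau> * a))
      + \<i> * of_real b * (- (of_real \<tau>)\<^sup>2 * psi (\<i> * of_real (\<tau> * a)))) {0..\<tau>}"
    using assms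
    by (simp only:) (intro has_integral_add has_integral_mult_right integrable_integral g
        has_integral_iexp_scaled has_integral_times_iexp_scaled; simp)
  then show ?thesis
    unfolding R2_def g_def by (simp add: integral_unique algebra_simps power2_eq_square)
qed

lemma norm_R2_le:
  assumes "0 < \<tau>"
  shows "cmod (R2 a b \<tau>) \<le> \<tau>^3 * b\<^sup>2 / 2"
proof -
  define rem where "rem x = iexp x - 1 - \<i> * of_real x" for x
  define g where "g s = iexp (s * a) * rem (s * b)" for s
  have "((\<lambda>s. s\<^sup>2 * b\<^sup>2 / 2) has_integral \<tau>^3 * b\<^sup>2 / 6) {0..\<tau>}"
  proof -
    have "((\<lambda>s. s^3 * b\<^sup>2 / 6) has_vector_derivative s\<^sup>2 * b\<^sup>2 / 2) (at s within {0..\<tau>})" for s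
      unfolding has_real_derivative_iff_has_vector_derivative[symmetric]
      by (auto intro!: derivative_eq_intros simp: power2_eq_square power3_eq_cube)
    from fundamental_theorem_of_calculus[OF _ this] assms show ?thesis by simp
  qed
  moreover have "g integrable_on {0..\<tau>}"
    unfolding g_def rem_def by (intro integrable_continuous_real continuous_intros)
  moreover have "cmod (g s) \<le> s\<^sup>2 * b\<^sup>2 / 2" for s
    using norm_iexp_sub_taylor1_le[of "s * b"] unfolding g_def rem_def by (simp add: norm_mult power_mult_distrib)
  ultimately have integral_le: "cmod (integral {0..\<tau>} g) \<le> \<tau>^3 * b\<^sup>2 / 6"
    by (intro has_integral_norm_le[OF integrable_integral])
  have "cmod (of_real \<tau> * psi (\<i> * of_real (\<tau> * a)) * rem (\<tau> * b))
      = \<tau> * cmod (psi (\<i> * of_real (\<tau> * a))) * cmod (rem (\<tau> * b))"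
    using assms by (simp add: norm_mult)
  also have "\<dots> \<le> \<tau> * (1/2) * ((\<tau> * b)\<^sup>2 / 2)"
    using assms norm_psi_i_le[of "\<tau> * a"] norm_iexp_sub_taylor1_le[of "\<tau> * b"]
    unfolding rem_def by (intro mult_mono) auto
  finally have correction_le: "cmod (of_real \<tau> * psi (\<i> * of_real (\<tau> * a)) * rem (\<tau> * b)) \<le> \<tau> * (1/2) * ((\<tau> * b)\<^sup>2 / 2)" .
  have "cmod (R2 a b \<tau>) \<le> cmod (integral {0..\<tau>} g) + cmod (of_real \<tau> * psi (\<i> * of_real (\<tau> * a)) * rem (\<tau> * b))"
    using R2_eq_taylor_remainders[of \<tau> a b] assms unfolding g_def rem_def by (simp add: norm_triangle_ineq)
  also have "\<dots> \<le> \<tau>^3 * b\<^sup>2 / 6 + \<tau> * (1/2) * ((\<tau> * b)\<^sup>2 / 2)"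
    using integral_le correction_le by (rule add_mono)
  also have "\<dots> \<le> \<tau>^3 * b\<^sup>2 / 2"
    using assms by (simp add: power_mult_distrib power2_eq_square power3_eq_cube field_simps)
  finally show ?thesis .
qed

section \<open>Frequency weights and lattice sums\<close>

definition bracket_sq :: "int^'d \<Rightarrow> real" where
  "bracket_sq \<xi> = 1 + real_of_int (nsq \<xi>)"

lemma nsq_nonneg: "0 \<le> nsq x"
  unfolding nsq_def idot_def by (auto intro!: sum_nonneg)

lemma nsq_uminus [simp]: "nsq (- x) = nsq x"
  unfolding nsq_def idot_def by simp

lemma bracket_sq_ge_1: "1 \<le> bracket_sq x"
  unfolding bracket_sq_def using nsq_nonneg[of x] by simp

lemma bracket_sq_pos: "0 < bracket_sq x"
  using bracket_sq_ge_1[of x] by simp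

lemma bracket_sq_uminus [simp]: "bracket_sq (- x) = bracket_sq x"
  unfolding bracket_sq_def by simp

lemma hs_weight_eq: "hs_weight s \<xi> = bracket_sq \<xi> powr s"
  unfolding hs_weight_def bracket_sq_def ..

lemma hs_weight_nonneg: "0 \<le> hs_weight s \<xi>"
  unfolding hs_weight_def by simp

lemma component_sq_le_nsq: "(real_of_int (x $ i))\<^sup>2 \<le> real_of_int (nsq x)"
proof -
  have "x $ i * x $ i \<le> (\<Sum>j\<in>UNIV. x $ j * x $ j)"
    by (rule member_le_sum) auto
  then have "(x $ i)\<^sup>2 \<le> nsq x"
    unfolding nsq_def idot_def by (simp add: power2_eq_square)
  then show ?thesis
    by (metis of_int_le_iff of_int_power)
qed

lemma idot_sq_le: "(real_of_int (idot x y))\<^sup>2 \<le> real_of_int (nsq x) * real_of_int (nsq y)"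
  using Cauchy_Schwarz_ineq_sum[of "\<lambda>i. real_of_int (x $ i)" "\<lambda>i. real_of_int (y $ i)" UNIV]
  unfolding nsq_def idot_def by (simp add: power2_eq_square)

lemma nsq_add3_le: "nsq (p + q + r) \<le> 3 * (nsq p + nsq q + nsq r)"
proof -
  have "(p + q + r) $ i * (p + q + r) $ i \<le> 3 * (p $ i * p $ i + q $ i * q $ i + r $ i * r $ i)" for i
  proof -
    have "0 \<le> (p$i - q$i)\<^sup>2 + (q$i - r$i)\<^sup>2 + (p$i - r$i)\<^sup>2" by simp
    then show ?thesis by (simp add: power2_eq_square algebra_simps)
  qed
  then show ?thesis
    unfolding nsq_def idot_def by (simp add: sum_mono sum_distrib_left flip: sum.distrib)
qed

lemma beta_sq_le:
  "(real_of_int (2 * idot p q + 2 * idot p r + 2 * idot q r))\<^sup>2 \<le> 36 * (bracket_sq p * bracket_sq q * bracket_sq r)"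
proof -
  define P where "P = bracket_sq p * bracket_sq q * bracket_sq r"
  have le: "x * y \<le> (1 + x) * (1 + y) * (1 + z)" if "0 \<le> x" "0 \<le> y" "0 \<le> z" for x y z :: real
    using that by (simp add: algebra_simps)
  have dot_le: "(real_of_int (idot x y))\<^sup>2 \<le> bracket_sq x * bracket_sq y * bracket_sq z" for x y z :: "int^'d"
  proof -
    have "real_of_int (nsq x) * real_of_int (nsq y) \<le> bracket_sq x * bracket_sq y * bracket_sq z"
      using le[of "real_of_int (nsq x)" "real_of_int (nsq y)" "real_of_int (nsq z)"]
        nsq_nonneg[of x] nsq_nonneg[of y] nsq_nonneg[of z]
      unfolding bracket_sq_def by simp
    with idot_sq_le[of x y] show ?thesis
      by linarith
  qed
  define x y z where "x = real_of_int (idot p q)" and "y = real_of_int (idot p r)"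
    and "z = real_of_int (idot q r)"
  have "(2*x + 2*y + 2*z)\<^sup>2 \<le> 12 * (x\<^sup>2 + y\<^sup>2 + z\<^sup>2)"
  proof -
    have "0 \<le> (x - y)\<^sup>2 + (y - z)\<^sup>2 + (x - z)\<^sup>2" by simp
    then show ?thesis by (simp add: power2_eq_square algebra_simps)
  qed
  also have "\<dots> \<le> 36 * P"
    using dot_le[of p q r] dot_le[of p r q] dot_le[of q r p] unfolding x_def y_def z_def P_def
    by (simp add: mult_ac)
  finally show ?thesis
    unfolding x_def y_def z_def P_def by simp
qed

lemma norm_R2_beta_le:
  assumes "0 < \<tau>"
  shows "cmod (R2 \<alpha> (real_of_int (2 * idot p q + 2 * idot p r + 2 * idot q r)) \<tau>)
           \<le> 18 * \<tau>^3 * (bracket_sq p * bracket_sq q * bracket_sq r)"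
proof -
  have "cmod (R2 \<alpha> (real_of_int (2 * idot p q + 2 * idot p r + 2 * idot q r)) \<tau>)
      \<le> \<tau>^3 * (real_of_int (2 * idot p q + 2 * idot p r + 2 * idot q r))\<^sup>2 / 2"
    by (rule norm_R2_le[OF assms])
  also have "\<dots> \<le> \<tau>^3 * (36 * (bracket_sq p * bracket_sq q * bracket_sq r)) / 2"
    using beta_sq_le[of p q r] assms by (intro divide_right_mono mult_left_mono) auto
  finally show ?thesis
    by (simp add: mult_ac)
qed

lemma bracket_sq_add3_powr_le:
  assumes "0 \<le> \<gamma>"
  shows "bracket_sq (p + q + r) powr (\<gamma>/2)
           \<le> 3 powr \<gamma> * (bracket_sq p powr (\<gamma>/2) + bracket_sq q powr (\<gamma>/2) + bracket_sq r powr (\<gamma>/2))"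
proof -
  define m where "m = max (max (bracket_sq p) (bracket_sq q)) (bracket_sq r)"
  have m: "1 \<le> m" unfolding m_def using bracket_sq_ge_1[of p] by simp
  have "real_of_int (nsq (p + q + r)) \<le> 3 * (real_of_int (nsq p) + real_of_int (nsq q) + real_of_int (nsq r))"
    using nsq_add3_le[of p q r] by (metis of_int_le_iff of_int_add of_int_mult of_int_numeral)
  then have "bracket_sq (p + q + r) \<le> 9 * m"
    unfolding m_def bracket_sq_def by (auto simp: max_def)
  then have "bracket_sq (p + q + r) powr (\<gamma>/2) \<le> (9 * m) powr (\<gamma>/2)"
    using assms bracket_sq_pos[of "p + q + r"] by (intro powr_mono2) auto
  also have "\<dots> = 3 powr \<gamma> * m powr (\<gamma>/2)"
    using m by (simp add: powr_mult powr_powr flip: powr_numeral)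
  also have "m powr (\<gamma>/2) \<le> bracket_sq p powr (\<gamma>/2) + bracket_sq q powr (\<gamma>/2) + bracket_sq r powr (\<gamma>/2)"
    unfolding m_def by (auto simp: max_def add_increasing add_increasing2)
  finally show ?thesis by (simp add: mult_left_mono)
qed

lemma summable_on_nat_bracket_powr:
  assumes "1/2 < \<sigma>"
  shows "(\<lambda>n::nat. (1 + (real n)\<^sup>2) powr (-\<sigma>)) summable_on UNIV"
proof -
  have "summable (\<lambda>n. real n powr (-2*\<sigma>))" using assms by (subst summable_real_powr_iff) simp
  then have "summable (\<lambda>n. 2 powr \<sigma> * real (Suc n) powr (-2*\<sigma>))"
    by (subst (asm) summable_Suc_iff[symmetric]) (rule summable_mult)
  then have "(\<lambda>n. 2 powr \<sigma> * real (Suc n) powr (-2*\<sigma>)) summable_on UNIV"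
    by (rule summable_nonneg_imp_summable_on) simp
  then show ?thesis
  proof (rule summable_on_comparison_test)
    fix n :: nat
    have "(1 + real n)\<^sup>2 / 2 \<le> 1 + (real n)\<^sup>2"
      using zero_le_power2[of "real n - 1"] by (simp add: power2_eq_square algebra_simps)
    then have "(1 + (real n)\<^sup>2) powr (-\<sigma>) \<le> ((1 + real n)\<^sup>2 / 2) powr (-\<sigma>)"
      using assms by (intro powr_mono2') auto
    also have "\<dots> = ((1 + real n) powr 2) powr (-\<sigma>) * 2 powr \<sigma>"
      by (simp add: powr_divide powr_minus_divide powr_realpow)
    also have "\<dots> = 2 powr \<sigma> * real (Suc n) powr (-2*\<sigma>)"
      by (simp only: powr_powr) (simp add: add.commute)
    finally show "(1 + (real n)\<^sup>2) powr (-\<sigma>) \<le> 2 powr \<sigma> * real (Suc n) powr (-2*\<sigma>)" .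
  qed simp
qed

lemma summable_on_int_bracket_powr:
  assumes "1/2 < \<sigma>"
  shows "(\<lambda>k::int. (1 + (real_of_int k)\<^sup>2) powr (-\<sigma>)) summable_on UNIV"
proof -
  define g where "g k = (1 + (real_of_int k)\<^sup>2) powr (-\<sigma>)" for k :: int
  have "g summable_on range int"
    using summable_on_nat_bracket_powr[OF assms] by (subst summable_on_reindex) (auto simp: g_def o_def)
  moreover have "g summable_on uminus ` range int"
    using summable_on_nat_bracket_powr[OF assms]
    by (subst summable_on_reindex, simp, subst summable_on_reindex) (auto simp: g_def o_def)
  moreover have "UNIV = range int \<union> uminus ` range int"
  proof (intro set_eqI iffI)
    fix k :: int
    show "k \<in> range int \<union> uminus ` range int"
      by (cases k rule: int_cases2) auto
  qed simp
  ultimately show ?thesis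
    unfolding g_def by (metis summable_on_union)
qed

text \<open>Compare \<open>\<langle>x\<rangle>\<^sup>-\<^sup>2\<^sup>\<gamma>\<close> with the product \<open>\<Prod>\<^sub>i \<langle>x\<^sub>i\<rangle>\<^sup>-\<^sup>2\<^sup>\<gamma>\<^sup>/\<^sup>d\<close> of one-dimensional sums, using
  \<open>\<langle>x\<^sub>i\<rangle>\<^sup>2 \<le> \<langle>x\<rangle>\<^sup>2\<close> in each factor.\<close>
lemma summable_on_bracket_sq_powr:
  assumes "real CARD('d) / 2 < \<gamma>"
  shows "(\<lambda>x::int^'d. bracket_sq x powr (-\<gamma>)) summable_on UNIV"
proof -
  define d where "d = real CARD('d)"
  have d: "0 < d" unfolding d_def by simp
  define \<sigma> where "\<sigma> = \<gamma> / d"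
  have \<sigma>: "1/2 < \<sigma>" using assms d unfolding \<sigma>_def d_def by (simp add: field_simps)
  define G where "G k = (1 + (real_of_int k)\<^sup>2) powr (-\<sigma>)" for k :: int
  have "Infinite_Sum.abs_summable_on G UNIV"
    using summable_on_int_bracket_powr[OF \<sigma>] by (simp add: G_def)
  then have "Infinite_Set_Sum.abs_summable_on G UNIV"
    by (rule abs_summable_equivalent[THEN iffD1])
  then have "Infinite_Set_Sum.abs_summable_on (\<lambda>h. \<Prod>i\<in>UNIV. G (h i)) (PiE (UNIV :: 'd set) (\<lambda>_. UNIV))"
    by (intro abs_summable_on_prod_PiE) auto
  moreover have "range (vec_nth :: int^'d \<Rightarrow> _) = UNIV"
    by (metis surj_def vec_lambda_inverse UNIV_I)
  ultimately have "Infinite_Sum.abs_summable_on (\<lambda>h. \<Prod>i\<in>UNIV. G (h i)) (range (vec_nth :: int^'d \<Rightarrow> _))"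
    by (intro abs_summable_equivalent[THEN iffD2]) (simp add: PiE_UNIV)
  then have "(\<lambda>h. \<Prod>i\<in>UNIV. G (h i)) summable_on range (vec_nth :: int^'d \<Rightarrow> _)"
    by (simp add: G_def prod_nonneg)
  then have "(\<lambda>x::int^'d. \<Prod>i\<in>UNIV. G (x $ i)) summable_on UNIV"
    by (subst (asm) summable_on_reindex) (auto simp: inj_on_def vec_eq_iff o_def)
  then show ?thesis
  proof (rule summable_on_comparison_test)
    fix x :: "int^'d"
    have "(\<Prod>i\<in>UNIV. 1 + (real_of_int (x $ i))\<^sup>2) \<le> (\<Prod>i\<in>(UNIV::'d set). bracket_sq x)"
      by (rule prod_mono) (use component_sq_le_nsq[of x] in \<open>auto simp: bracket_sq_def\<close>)
    moreover have "0 < (\<Prod>i\<in>(UNIV::'d set). 1 + (real_of_int (x $ i))\<^sup>2)"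
      by (rule prod_pos) (auto intro: add_pos_nonneg)
    ultimately have "(\<Prod>i\<in>(UNIV::'d set). bracket_sq x) powr (-\<sigma>) \<le> (\<Prod>i\<in>UNIV. G (x $ i))"
      using \<sigma> unfolding G_def by (simp add: powr_mono2' flip: prod_powr_distrib)
    moreover have "(\<Prod>i\<in>(UNIV::'d set). bracket_sq x) powr (-\<sigma>) = bracket_sq x powr (-\<gamma>)"
      using d bracket_sq_pos[of x] unfolding \<sigma>_def d_def by (simp add: powr_powr flip: powr_realpow)
    ultimately show "bracket_sq x powr (-\<gamma>) \<le> (\<Prod>i\<in>UNIV. G (x $ i))"
      by simp
  qed simp
qed

section \<open>Trilinear convolution on a countable group\<close>

lemma nn_integral_count_space_eq_infsum:
  fixes f :: "'a \<Rightarrow> real"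
  assumes "\<And>x. 0 \<le> f x" and "f summable_on UNIV"
  shows "(\<integral>\<^sup>+x. ennreal (f x) \<partial>count_space UNIV) = ennreal (infsum f UNIV)"
proof -
  have "Infinite_Sum.abs_summable_on f UNIV"
    using assms by simp
  then have "Infinite_Set_Sum.abs_summable_on f UNIV"
    by (rule abs_summable_equivalent[THEN iffD1])
  with assms show ?thesis
    by (simp add: nn_integral_conv_infsetsum infsetsum_infsum)
qed

lemma summable_on_if_nn_integral_finite:
  fixes f :: "'a \<Rightarrow> real"
  assumes "\<And>x. 0 \<le> f x" and "(\<integral>\<^sup>+x. ennreal (f x) \<partial>count_space UNIV) < \<infinity>"
  shows "f summable_on UNIV"
proof -
  have "integrable (count_space UNIV) f"
    using assms by (intro integrableI_nonneg) auto
  then have "Infinite_Set_Sum.abs_summable_on f UNIV"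
    by (simp add: abs_summable_on_def)
  with assms show ?thesis
    by (simp add: abs_summable_equivalent[symmetric])
qed

text \<open>No summability hypothesis is needed: a non-summable \<open>f\<close> has \<open>infsum f UNIV = 0\<close>.\<close>
lemma ennreal_norm_infsum_le_nn_integral:
  fixes f :: "'a \<Rightarrow> complex"
  shows "ennreal (norm (infsum f UNIV)) \<le> (\<integral>\<^sup>+x. ennreal (norm (f x)) \<partial>count_space UNIV)"
proof (cases "f summable_on UNIV")
  case True
  then have "(\<lambda>x. norm (f x)) summable_on UNIV"
    by (simp add: summable_on_iff_abs_summable_on_complex)
  then have "(\<integral>\<^sup>+x. ennreal (norm (f x)) \<partial>count_space UNIV) = ennreal (\<Sum>\<^sub>\<infinity>x. norm (f x))"
    by (simp add: nn_integral_count_space_eq_infsum)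
  moreover have "norm (infsum f UNIV) \<le> (\<Sum>\<^sub>\<infinity>x. norm (f x))"
    using True by (simp add: norm_infsum_bound summable_on_iff_abs_summable_on_complex)
  ultimately show ?thesis by (simp add: ennreal_leI)
qed (simp add: infsum_not_exists)

lemma nn_integral_count_space_pair:
  fixes f :: "'a::countable \<times> 'b::countable \<Rightarrow> ennreal"
  shows "(\<integral>\<^sup>+z. f z \<partial>count_space UNIV) = (\<integral>\<^sup>+p. \<integral>\<^sup>+q. f (p, q) \<partial>count_space UNIV \<partial>count_space UNIV)"
proof -
  interpret sigma_finite_measure "count_space (UNIV :: 'b set)"
    by (rule sigma_finite_measure_count_space_countable) simp
  have prod: "count_space UNIV = count_space (UNIV :: 'a set) \<Otimes>\<^sub>M count_space (UNIV :: 'b set)"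
    using pair_measure_countable[of "UNIV :: 'a set" "UNIV :: 'b set"] by simp
  have "(\<integral>\<^sup>+p. \<integral>\<^sup>+q. f (p, q) \<partial>count_space UNIV \<partial>count_space UNIV)
      = integral\<^sup>N (count_space (UNIV :: 'a set) \<Otimes>\<^sub>M count_space (UNIV :: 'b set)) f"
    by (rule nn_integral_fst) (simp add: prod[symmetric])
  then show ?thesis
    by (simp add: prod[symmetric])
qed

lemma nn_integral_count_space_pair_mult:
  fixes b :: "'a::countable \<Rightarrow> ennreal" and c :: "'b::countable \<Rightarrow> ennreal"
  shows "(\<integral>\<^sup>+z. b (fst z) * c (snd z) \<partial>count_space UNIV)
           = (\<integral>\<^sup>+p. b p \<partial>count_space UNIV) * (\<integral>\<^sup>+q. c q \<partial>count_space UNIV)"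
  by (simp add: nn_integral_count_space_pair nn_integral_cmult nn_integral_multc)

lemma nn_integral_count_space_shift:
  fixes f :: "'a::group_add \<Rightarrow> ennreal"
  shows "(\<integral>\<^sup>+x. f (x - c) \<partial>count_space UNIV) = (\<integral>\<^sup>+x. f x \<partial>count_space UNIV)"
  by (rule nn_integral_bij_count_space) (rule bij_betwI[where g = "\<lambda>x. x + c"], auto)

lemma ennreal_sq_sum3_le:
  fixes x y z :: ennreal
  shows "(x + y + z)\<^sup>2 \<le> 3 * (x\<^sup>2 + y\<^sup>2 + z\<^sup>2)"
proof -
  have "(x + y + z)\<^sup>2 = x\<^sup>2 + y\<^sup>2 + z\<^sup>2 + (2*x*y + 2*y*z + 2*x*z)"
    unfolding power2_eq_square mult_2 distrib_left distrib_right by (simp only: ac_simps)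
  also have "\<dots> \<le> x\<^sup>2 + y\<^sup>2 + z\<^sup>2 + ((x\<^sup>2 + y\<^sup>2) + (y\<^sup>2 + z\<^sup>2) + (x\<^sup>2 + z\<^sup>2))"
    by (intro add_left_mono add_mono sum_of_squares_ge_ennreal)
  also have "\<dots> = 3 * (x\<^sup>2 + y\<^sup>2 + z\<^sup>2)"
  proof -
    have three: "(3::ennreal) = 1 + 1 + 1" by simp
    show ?thesis
      unfolding three distrib_left distrib_right mult_1 by (simp only: ac_simps)
  qed
  finally show ?thesis .
qed

definition weighted_l2_sq :: "('a \<Rightarrow> real) \<Rightarrow> ('a \<Rightarrow> real) \<Rightarrow> ennreal" where
  "weighted_l2_sq W a = (\<integral>\<^sup>+x. ennreal ((W x * a x)\<^sup>2) \<partial>count_space UNIV)"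

lemma nn_integral_sq_le_weighted:
  fixes a W :: "'a \<Rightarrow> real"
  assumes "\<And>x. 0 \<le> a x" and "\<And>x. 0 < W x"
  shows "(\<integral>\<^sup>+x. ennreal (a x) \<partial>count_space UNIV)\<^sup>2
           \<le> (\<integral>\<^sup>+x. ennreal (1 / (W x)\<^sup>2) \<partial>count_space UNIV) * weighted_l2_sq W a"
proof -
  have "ennreal (a x) = ennreal (1 / W x) * ennreal (W x * a x)" for x
    using assms[of x] by (simp flip: ennreal_mult)
  moreover have "(ennreal (1 / W x))\<^sup>2 = ennreal (1 / (W x)\<^sup>2)" "(ennreal (W x * a x))\<^sup>2 = ennreal ((W x * a x)\<^sup>2)" for x
    using assms[of x] by (simp_all add: ennreal_power power_one_over)
  ultimately show ?thesis
    using Cauchy_Schwarz_nn_integral[of "\<lambda>x. ennreal (1 / W x)" "count_space UNIV" "\<lambda>x. ennreal (W x * a x)"]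
    unfolding weighted_l2_sq_def by simp
qed

text \<open>\<open>conv3 a b c \<xi> = \<Sum>\<^sub>p\<^sub>+\<^sub>q\<^sub>+\<^sub>r\<^sub>=\<^sub>\<xi> a(p) b(q) c(r)\<close>, summed in \<open>ennreal\<close> so that it needs no
  summability hypothesis; finiteness comes out of the estimates.\<close>
definition conv3 :: "('a::ab_group_add \<Rightarrow> real) \<Rightarrow> ('a \<Rightarrow> real) \<Rightarrow> ('a \<Rightarrow> real) \<Rightarrow> 'a \<Rightarrow> ennreal" where
  "conv3 a b c \<xi> = (\<integral>\<^sup>+z. ennreal (a (fst z) * b (snd z) * c (\<xi> - fst z - snd z)) \<partial>count_space UNIV)"

lemma conv3_rotate: "conv3 a b c \<xi> = conv3 b c a \<xi>"
proof -
  have "bij (\<lambda>(p, q). (q, \<xi> - p - q))"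
    by (rule bij_betwI[where g = "\<lambda>(q, r). (\<xi> - q - r, q)"]) auto
  from nn_integral_bij_count_space[OF this,
      of "\<lambda>z. ennreal (b (fst z) * c (snd z) * a (\<xi> - fst z - snd z))"]
  show ?thesis
    unfolding conv3_def by (simp add: case_prod_beta mult_ac)
qed

text \<open>Young's inequality \<open>\<ell>\<^sup>1 * \<ell>\<^sup>1 * \<ell>\<^sup>2 \<subseteq> \<ell>\<^sup>2\<close>, via Cauchy--Schwarz against the measure \<open>a(p) b(q)\<close>.\<close>
lemma nn_integral_conv3_sq_le:
  fixes a b c :: "'a::{countable, ab_group_add} \<Rightarrow> real"
  assumes a: "\<And>x. 0 \<le> a x" and b: "\<And>x. 0 \<le> b x" and c: "\<And>x. 0 \<le> c x"
  shows "(\<integral>\<^sup>+\<xi>. (conv3 a b c \<xi>)\<^sup>2 \<partial>count_space UNIV)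
           \<le> (\<integral>\<^sup>+x. ennreal (a x) \<partial>count_space UNIV)\<^sup>2 * (\<integral>\<^sup>+x. ennreal (b x) \<partial>count_space UNIV)\<^sup>2
             * (\<integral>\<^sup>+x. ennreal ((c x)\<^sup>2) \<partial>count_space UNIV)"
proof -
  define ab where "ab z = ennreal (a (fst z) * b (snd z))" for z :: "'a \<times> 'a"
  define K where "K = (\<integral>\<^sup>+z. ab z \<partial>count_space UNIV)"
  define N where "N = (\<integral>\<^sup>+x. ennreal ((c x)\<^sup>2) \<partial>count_space UNIV)"
  have K: "K = (\<integral>\<^sup>+x. ennreal (a x) \<partial>count_space UNIV) * (\<integral>\<^sup>+x. ennreal (b x) \<partial>count_space UNIV)"
    unfolding K_def ab_def using a b
    by (simp add: ennreal_mult flip: nn_integral_count_space_pair_mult)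
  have pointwise: "(conv3 a b c \<xi>)\<^sup>2 \<le> K * (\<integral>\<^sup>+z. ab z * ennreal ((c (\<xi> - fst z - snd z))\<^sup>2) \<partial>count_space UNIV)" for \<xi>
  proof -
    define u where "u z = ennreal (sqrt (a (fst z) * b (snd z)))" for z :: "'a \<times> 'a"
    define v where "v z = ennreal (sqrt (a (fst z) * b (snd z)) * c (\<xi> - fst z - snd z))" for z :: "'a \<times> 'a"
    have "conv3 a b c \<xi> = (\<integral>\<^sup>+z. u z * v z \<partial>count_space UNIV)"
      unfolding conv3_def u_def v_def using a b c
      by (intro nn_integral_cong) (simp add: mult.assoc flip: ennreal_mult)
    moreover have "u z ^ 2 = ab z" "v z ^ 2 = ab z * ennreal ((c (\<xi> - fst z - snd z))\<^sup>2)" for z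
      unfolding u_def v_def ab_def using a b c
      by (simp_all add: ennreal_power power_mult_distrib flip: ennreal_mult)
    ultimately show ?thesis
      using Cauchy_Schwarz_nn_integral[of u "count_space UNIV" v] unfolding K_def by simp
  qed
  have "(\<integral>\<^sup>+\<xi>. (conv3 a b c \<xi>)\<^sup>2 \<partial>count_space UNIV)
      \<le> (\<integral>\<^sup>+\<xi>. K * (\<integral>\<^sup>+z. ab z * ennreal ((c (\<xi> - fst z - snd z))\<^sup>2) \<partial>count_space UNIV) \<partial>count_space UNIV)"
    by (intro nn_integral_mono pointwise)
  also have "\<dots> = K * (\<integral>\<^sup>+\<xi>. \<integral>\<^sup>+z. ab z * ennreal ((c (\<xi> - fst z - snd z))\<^sup>2) \<partial>count_space UNIV \<partial>count_space UNIV)"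
    by (simp add: nn_integral_cmult)
  also have "\<dots> = K * (\<integral>\<^sup>+z. \<integral>\<^sup>+\<xi>. ab z * ennreal ((c (\<xi> - (fst z + snd z)))\<^sup>2) \<partial>count_space UNIV \<partial>count_space UNIV)"
    by (subst nn_integral_count_space_nn_integral) (auto simp: diff_diff_eq)
  also have "\<dots> = K * K * N"
    unfolding N_def K_def
    by (simp add: nn_integral_cmult nn_integral_multc nn_integral_count_space_shift[of "\<lambda>x. ennreal ((c x)\<^sup>2)"]
        mult.assoc)
  finally show ?thesis
    unfolding K N_def by (simp add: power2_eq_square mult_ac)
qed

lemma conv3_weight_le:
  fixes W a b c :: "'a::ab_group_add \<Rightarrow> real"
  assumes W: "\<And>x. 0 \<le> W x" and \<kappa>: "0 \<le> \<kappa>"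
    and W_add3: "\<And>p q r. W (p + q + r) \<le> \<kappa> * (W p + W q + W r)"
    and a: "\<And>x. 0 \<le> a x" and b: "\<And>x. 0 \<le> b x" and c: "\<And>x. 0 \<le> c x"
  shows "ennreal (W \<xi>) * conv3 a b c \<xi>
           \<le> ennreal \<kappa> * (conv3 (\<lambda>x. W x * a x) b c \<xi> + conv3 a (\<lambda>x. W x * b x) c \<xi> + conv3 a b (\<lambda>x. W x * c x) \<xi>)"
proof -
  have pointwise: "ennreal (W (p + q + r) * (a p * b q * c r))
      \<le> ennreal \<kappa> * (ennreal (W p * a p * b q * c r) + ennreal (a p * (W q * b q) * c r)
                       + ennreal (a p * b q * (W r * c r)))" for p q r
  proof -
    have "W (p + q + r) * (a p * b q * c r) \<le> \<kappa> * (W p + W q + W r) * (a p * b q * c r)"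
      using W_add3 a b c by (intro mult_right_mono) auto
    also have "\<dots> = \<kappa> * (W p * a p * b q * c r + a p * (W q * b q) * c r + a p * b q * (W r * c r))"
      by (simp add: algebra_simps)
    finally show ?thesis
      using W a b c \<kappa> by (simp add: ennreal_leI flip: ennreal_mult ennreal_plus)
  qed
  have "ennreal (W \<xi>) * conv3 a b c \<xi>
      = (\<integral>\<^sup>+z. ennreal (W (fst z + snd z + (\<xi> - fst z - snd z)) * (a (fst z) * b (snd z) * c (\<xi> - fst z - snd z)))
           \<partial>count_space UNIV)"
    unfolding conv3_def using W a b c by (simp add: mult.assoc flip: nn_integral_cmult ennreal_mult)
  also have "\<dots> \<le> (\<integral>\<^sup>+z. ennreal \<kappa> * (ennreal (W (fst z) * a (fst z) * b (snd z) * c (\<xi> - fst z - snd z))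
        + ennreal (a (fst z) * (W (snd z) * b (snd z)) * c (\<xi> - fst z - snd z))
        + ennreal (a (fst z) * b (snd z) * (W (\<xi> - fst z - snd z) * c (\<xi> - fst z - snd z)))) \<partial>count_space UNIV)"
    by (intro nn_integral_mono pointwise)
  also have "\<dots> = ennreal \<kappa> * (conv3 (\<lambda>x. W x * a x) b c \<xi> + conv3 a (\<lambda>x. W x * b x) c \<xi> + conv3 a b (\<lambda>x. W x * c x) \<xi>)"
    unfolding conv3_def by (simp add: nn_integral_add nn_integral_cmult)
  finally show ?thesis .
qed

lemma sq_weight_conv3_le:
  fixes W a b c :: "'a::ab_group_add \<Rightarrow> real"
  assumes W: "\<And>x. 0 \<le> W x" and \<kappa>: "0 \<le> \<kappa>"
    and "\<And>p q r. W (p + q + r) \<le> \<kappa> * (W p + W q + W r)"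
    and "\<And>x. 0 \<le> a x" and "\<And>x. 0 \<le> b x" and "\<And>x. 0 \<le> c x"
  shows "ennreal ((W \<xi>)\<^sup>2) * (conv3 a b c \<xi>)\<^sup>2
           \<le> ennreal (3 * \<kappa>\<^sup>2) * ((conv3 (\<lambda>x. W x * a x) b c \<xi>)\<^sup>2 + (conv3 a (\<lambda>x. W x * b x) c \<xi>)\<^sup>2
                                 + (conv3 a b (\<lambda>x. W x * c x) \<xi>)\<^sup>2)"
proof -
  define h1 h2 h3 where "h1 = conv3 (\<lambda>x. W x * a x) b c \<xi>" and "h2 = conv3 a (\<lambda>x. W x * b x) c \<xi>"
    and "h3 = conv3 a b (\<lambda>x. W x * c x) \<xi>"
  have "ennreal ((W \<xi>)\<^sup>2) * (conv3 a b c \<xi>)\<^sup>2 = (ennreal (W \<xi>) * conv3 a b c \<xi>)\<^sup>2"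
    using W by (simp add: ennreal_power power_mult_distrib)
  also have "\<dots> \<le> (ennreal \<kappa> * (h1 + h2 + h3))\<^sup>2"
    unfolding h1_def h2_def h3_def using assms by (intro power_mono conv3_weight_le) auto
  also have "\<dots> = ennreal (\<kappa>\<^sup>2) * (h1 + h2 + h3)\<^sup>2"
    using \<kappa> by (simp add: power_mult_distrib ennreal_power)
  also have "\<dots> \<le> ennreal (\<kappa>\<^sup>2) * (3 * (h1\<^sup>2 + h2\<^sup>2 + h3\<^sup>2))"
    by (intro mult_left_mono ennreal_sq_sum3_le) simp
  also have "\<dots> = ennreal (3 * \<kappa>\<^sup>2) * (h1\<^sup>2 + h2\<^sup>2 + h3\<^sup>2)"
    by (simp only: ennreal_mult[OF _ zero_le_power2] ennreal_numeral ac_simps)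
  finally show ?thesis
    unfolding h1_def h2_def h3_def .
qed

lemma nn_integral_conv3_sq_le_weighted:
  fixes W a b c :: "'a::{countable, ab_group_add} \<Rightarrow> real"
  assumes "\<And>x. 0 < W x" and "\<And>x. 0 \<le> a x" and "\<And>x. 0 \<le> b x" and "\<And>x. 0 \<le> c x"
  shows "(\<integral>\<^sup>+\<xi>. (conv3 a b (\<lambda>x. W x * c x) \<xi>)\<^sup>2 \<partial>count_space UNIV)
           \<le> ((\<integral>\<^sup>+x. ennreal (1 / (W x)\<^sup>2) \<partial>count_space UNIV) * weighted_l2_sq W a)
             * ((\<integral>\<^sup>+x. ennreal (1 / (W x)\<^sup>2) \<partial>count_space UNIV) * weighted_l2_sq W b) * weighted_l2_sq W c"
proof -
  have "(\<integral>\<^sup>+\<xi>. (conv3 a b (\<lambda>x. W x * c x) \<xi>)\<^sup>2 \<partial>count_space UNIV)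
      \<le> (\<integral>\<^sup>+x. ennreal (a x) \<partial>count_space UNIV)\<^sup>2 * (\<integral>\<^sup>+x. ennreal (b x) \<partial>count_space UNIV)\<^sup>2
        * weighted_l2_sq W c"
    unfolding weighted_l2_sq_def using assms by (intro nn_integral_conv3_sq_le) (auto simp: less_imp_le)
  also have "\<dots> \<le> ((\<integral>\<^sup>+x. ennreal (1 / (W x)\<^sup>2) \<partial>count_space UNIV) * weighted_l2_sq W a)
      * ((\<integral>\<^sup>+x. ennreal (1 / (W x)\<^sup>2) \<partial>count_space UNIV) * weighted_l2_sq W b) * weighted_l2_sq W c"
    using assms by (intro mult_mono nn_integral_sq_le_weighted) auto
  finally show ?thesis .
qed

text \<open>The weighted \<open>\<ell>\<^sup>2\<close> space is an algebra under convolution as soon as \<open>W\<^sup>-\<^sup>1 \<in> \<ell>\<^sup>2\<close> and \<open>W\<close> is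
  subadditive up to a constant: distribute \<open>W(p+q+r)\<close> onto the factor carrying it, then use Young's
  inequality with that factor in \<open>\<ell>\<^sup>2\<close> and the other two in \<open>\<ell>\<^sup>1\<close>.\<close>
lemma nn_integral_weighted_conv3_sq_le:
  fixes W a b c :: "'a::{countable, ab_group_add} \<Rightarrow> real"
  assumes W: "\<And>x. 0 < W x" and "0 \<le> \<kappa>"
    and "\<And>p q r. W (p + q + r) \<le> \<kappa> * (W p + W q + W r)"
    and a: "\<And>x. 0 \<le> a x" and b: "\<And>x. 0 \<le> b x" and c: "\<And>x. 0 \<le> c x"
  shows "(\<integral>\<^sup>+\<xi>. ennreal ((W \<xi>)\<^sup>2) * (conv3 a b c \<xi>)\<^sup>2 \<partial>count_space UNIV)
           \<le> ennreal (9 * \<kappa>\<^sup>2) * (\<integral>\<^sup>+x. ennreal (1 / (W x)\<^sup>2) \<partial>count_space UNIV)\<^sup>2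
             * (weighted_l2_sq W a * weighted_l2_sq W b * weighted_l2_sq W c)"
proof -
  define S where "S = (\<integral>\<^sup>+x. ennreal (1 / (W x)\<^sup>2) \<partial>count_space UNIV)"
  define N where "N = weighted_l2_sq W"
  have "(\<integral>\<^sup>+\<xi>. ennreal ((W \<xi>)\<^sup>2) * (conv3 a b c \<xi>)\<^sup>2 \<partial>count_space UNIV)
      \<le> (\<integral>\<^sup>+\<xi>. ennreal (3 * \<kappa>\<^sup>2) * ((conv3 (\<lambda>x. W x * a x) b c \<xi>)\<^sup>2 + (conv3 a (\<lambda>x. W x * b x) c \<xi>)\<^sup>2
                                 + (conv3 a b (\<lambda>x. W x * c x) \<xi>)\<^sup>2) \<partial>count_space UNIV)"
    using assms by (intro nn_integral_mono sq_weight_conv3_le) (auto simp: less_imp_le)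
  also have "\<dots> = ennreal (3 * \<kappa>\<^sup>2) * ((\<integral>\<^sup>+\<xi>. (conv3 b c (\<lambda>x. W x * a x) \<xi>)\<^sup>2 \<partial>count_space UNIV)
      + (\<integral>\<^sup>+\<xi>. (conv3 c a (\<lambda>x. W x * b x) \<xi>)\<^sup>2 \<partial>count_space UNIV)
      + (\<integral>\<^sup>+\<xi>. (conv3 a b (\<lambda>x. W x * c x) \<xi>)\<^sup>2 \<partial>count_space UNIV))"
    unfolding conv3_rotate[of "\<lambda>x. W x * a x"] conv3_rotate[of a] conv3_rotate[of "\<lambda>x. W x * b x"]
    by (simp add: nn_integral_cmult nn_integral_add)
  also have "\<dots> \<le> ennreal (3 * \<kappa>\<^sup>2) * ((S * N b) * (S * N c) * N a + (S * N c) * (S * N a) * N b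
                                       + (S * N a) * (S * N b) * N c)"
    unfolding S_def N_def using W a b c by (intro mult_left_mono add_mono nn_integral_conv3_sq_le_weighted) auto
  also have "\<dots> = ennreal (3 * \<kappa>\<^sup>2) * (3 * (S\<^sup>2 * (N a * N b * N c)))"
  proof -
    have three: "(3::ennreal) = 1 + 1 + 1" by simp
    show ?thesis
      unfolding three power2_eq_square distrib_right mult_1 by (simp only: ac_simps)
  qed
  also have "\<dots> = ennreal (9 * \<kappa>\<^sup>2) * S\<^sup>2 * (N a * N b * N c)"
    by (simp only: ennreal_mult[OF _ zero_le_power2] ennreal_numeral ac_simps) simp
  finally show ?thesis
    unfolding S_def N_def .
qed

section \<open>Sobolev norms\<close>

lemma hs_norm_nonneg: "0 \<le> hs_norm s c"
  unfolding hs_norm_def by (simp add: infsum_nonneg hs_weight_nonneg)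

lemma hs_norm_sq: "(hs_norm s c)\<^sup>2 = (2*pi)^CARD('d) * (\<Sum>\<^sub>\<infinity>\<xi>. hs_weight s \<xi> * (cmod (c \<xi>))\<^sup>2)"
  for c :: "int^'d \<Rightarrow> complex"
  unfolding hs_norm_def by (simp add: infsum_nonneg hs_weight_nonneg)

lemma nn_integral_hs_weight_eq:
  fixes c :: "int^'d \<Rightarrow> complex"
  assumes "in_Hs s c"
  shows "(\<integral>\<^sup>+\<xi>. ennreal (hs_weight s \<xi> * (cmod (c \<xi>))\<^sup>2) \<partial>count_space UNIV)
           = ennreal ((hs_norm s c)\<^sup>2 / (2*pi)^CARD('d))"
  using assms unfolding in_Hs_def hs_norm_sq
  by (simp add: nn_integral_count_space_eq_infsum hs_weight_nonneg)

lemma in_Hs_hs_norm_le_if_nn_integral_le: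
  fixes c :: "int^'d \<Rightarrow> complex"
  assumes "(\<integral>\<^sup>+\<xi>. ennreal (hs_weight s \<xi> * (cmod (c \<xi>))\<^sup>2) \<partial>count_space UNIV) \<le> ennreal B" and "0 \<le> B"
  shows "in_Hs s c \<and> hs_norm s c \<le> sqrt ((2*pi)^CARD('d) * B)"
proof
  show "in_Hs s c"
    unfolding in_Hs_def using assms
    by (intro summable_on_if_nn_integral_finite) (auto simp: hs_weight_nonneg top.not_eq_extremum
        intro: le_less_trans[OF _ ennreal_less_top])
  then have "(\<Sum>\<^sub>\<infinity>\<xi>. hs_weight s \<xi> * (cmod (c \<xi>))\<^sup>2) \<le> B"
    using assms unfolding in_Hs_def
    by (simp add: nn_integral_count_space_eq_infsum hs_weight_nonneg)
  then show "hs_norm s c \<le> sqrt ((2*pi)^CARD('d) * B)"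
    unfolding hs_norm_def by simp
qed

lemma sum_le_hs_norm_sq:
  fixes c :: "int^'d \<Rightarrow> complex"
  assumes "in_Hs s c" and "finite F"
  shows "(2*pi)^CARD('d) * (\<Sum>\<xi>\<in>F. hs_weight s \<xi> * (cmod (c \<xi>))\<^sup>2) \<le> (hs_norm s c)\<^sup>2"
  using assms unfolding in_Hs_def hs_norm_sq
  by (simp add: finite_sum_le_infsum hs_weight_nonneg)

lemma in_Hs_hs_norm_le_if_sums_le:
  fixes c :: "int^'d \<Rightarrow> complex"
  assumes "0 \<le> B"
    and sums_le: "\<And>F. finite F \<Longrightarrow> (2*pi)^CARD('d) * (\<Sum>\<xi>\<in>F. hs_weight s \<xi> * (cmod (c \<xi>))\<^sup>2) \<le> B\<^sup>2"
  shows "in_Hs s c \<and> hs_norm s c \<le> B"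
proof
  have sums_le': "(\<Sum>\<xi>\<in>F. hs_weight s \<xi> * (cmod (c \<xi>))\<^sup>2) \<le> B\<^sup>2 / (2*pi)^CARD('d)" if "finite F" for F
    using sums_le[OF that] by (simp add: field_simps)
  show "in_Hs s c"
    unfolding in_Hs_def using sums_le'
    by (intro nonneg_bdd_above_summable_on bdd_aboveI) (auto simp: hs_weight_nonneg)
  then have "(\<Sum>\<^sub>\<infinity>\<xi>. hs_weight s \<xi> * (cmod (c \<xi>))\<^sup>2) \<le> B\<^sup>2 / (2*pi)^CARD('d)"
    unfolding in_Hs_def by (rule infsum_le_finite_sums) (use sums_le' in auto)
  then have "(2*pi)^CARD('d) * (\<Sum>\<^sub>\<infinity>\<xi>. hs_weight s \<xi> * (cmod (c \<xi>))\<^sup>2) \<le> B\<^sup>2"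
    by (simp add: field_simps)
  then show "hs_norm s c \<le> B"
    unfolding hs_norm_def using assms(1) by (simp add: real_le_lsqrt)
qed

lemma hs_weight_uminus [simp]: "hs_weight s (- \<xi>) = hs_weight s \<xi>"
  by (simp add: hs_weight_eq)

lemma in_Hs_conj_coeff [simp]: "in_Hs s (conj_coeff c) \<longleftrightarrow> in_Hs s c"
  unfolding in_Hs_def conj_coeff_def
  using summable_on_reindex_bij_betw[OF bij_uminus, of "\<lambda>\<xi>. hs_weight s \<xi> * (cmod (c \<xi>))\<^sup>2"] by simp

lemma hs_norm_conj_coeff [simp]: "hs_norm s (conj_coeff c) = hs_norm s c"
  unfolding hs_norm_def conj_coeff_def
  using infsum_reindex_bij_betw[OF bij_uminus, of "\<lambda>\<xi>. hs_weight s \<xi> * (cmod (c \<xi>))\<^sup>2"] by simp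

lemma nn_integral_hs_weight_bracket_sq_mult:
  fixes c :: "int^'d \<Rightarrow> complex"
  assumes "in_Hs (\<gamma> + 2) c"
  shows "(\<integral>\<^sup>+x. ennreal (hs_weight \<gamma> x * (bracket_sq x * cmod (c x))\<^sup>2) \<partial>count_space UNIV)
           = ennreal ((hs_norm (\<gamma> + 2) c)\<^sup>2 / (2*pi)^CARD('d))"
proof -
  have "hs_weight \<gamma> x * (bracket_sq x * cmod (c x))\<^sup>2 = hs_weight (\<gamma> + 2) x * (cmod (c x))\<^sup>2" for x
    unfolding hs_weight_eq using bracket_sq_pos[of x] by (simp add: powr_add powr_numeral power_mult_distrib)
  then show ?thesis
    using nn_integral_hs_weight_eq[OF assms] by simp
qed

text \<open>The algebra property of \<open>H\<^sup>\<gamma>\<close>, \<open>\<gamma> > d/2\<close>, on the Fourier side.\<close>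
lemma nn_integral_hs_weight_conv3_sq_le:
  fixes a b c :: "int^'d \<Rightarrow> real"
  assumes \<gamma>: "real CARD('d) / 2 < \<gamma>"
    and a: "\<And>x. 0 \<le> a x" and b: "\<And>x. 0 \<le> b x" and c: "\<And>x. 0 \<le> c x"
  shows "(\<integral>\<^sup>+\<xi>. ennreal (hs_weight \<gamma> \<xi>) * (conv3 a b c \<xi>)\<^sup>2 \<partial>count_space UNIV)
           \<le> ennreal ((3 * 3 powr \<gamma> * (\<Sum>\<^sub>\<infinity>x::int^'d. bracket_sq x powr (-\<gamma>)))\<^sup>2)
             * ((\<integral>\<^sup>+x. ennreal (hs_weight \<gamma> x * (a x)\<^sup>2) \<partial>count_space UNIV)
                * (\<integral>\<^sup>+x. ennreal (hs_weight \<gamma> x * (b x)\<^sup>2) \<partial>count_space UNIV)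
                * (\<integral>\<^sup>+x. ennreal (hs_weight \<gamma> x * (c x)\<^sup>2) \<partial>count_space UNIV))"
proof -
  define W where "W x = bracket_sq x powr (\<gamma>/2)" for x :: "int^'d"
  define S where "S = (\<Sum>\<^sub>\<infinity>x::int^'d. bracket_sq x powr (-\<gamma>))"
  have "0 < real CARD('d) / 2" by simp
  with \<gamma> have "0 \<le> \<gamma>" by linarith
  have W_pos: "0 < W x" for x
    unfolding W_def using bracket_sq_pos[of x] by simp
  have W_sq: "(W x)\<^sup>2 = hs_weight \<gamma> x" for x
    unfolding W_def hs_weight_eq by (simp add: power2_eq_square flip: powr_add)
  have l2: "weighted_l2_sq W f = (\<integral>\<^sup>+x. ennreal (hs_weight \<gamma> x * (f x)\<^sup>2) \<partial>count_space UNIV)" for f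
    unfolding weighted_l2_sq_def power_mult_distrib W_sq ..
  have inverse_weight: "1 / hs_weight \<gamma> x = bracket_sq x powr (-\<gamma>)" for x :: "int^'d"
    unfolding hs_weight_eq by (simp add: powr_minus_divide)
  have S: "(\<integral>\<^sup>+x. ennreal (1 / hs_weight \<gamma> (x::int^'d)) \<partial>count_space UNIV) = ennreal S"
    unfolding inverse_weight S_def
    by (rule nn_integral_count_space_eq_infsum[OF _ summable_on_bracket_sq_powr[OF \<gamma>]]) simp
  have W_add3: "W (p + q + r) \<le> 3 powr \<gamma> * (W p + W q + W r)" for p q r
    unfolding W_def using \<open>0 \<le> \<gamma>\<close> by (rule bracket_sq_add3_powr_le)
  have "(\<integral>\<^sup>+\<xi>. ennreal ((W \<xi>)\<^sup>2) * (conv3 a b c \<xi>)\<^sup>2 \<partial>count_space UNIV)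
      \<le> ennreal (9 * (3 powr \<gamma>)\<^sup>2) * (\<integral>\<^sup>+x. ennreal (1 / (W x)\<^sup>2) \<partial>count_space UNIV)\<^sup>2
        * (weighted_l2_sq W a * weighted_l2_sq W b * weighted_l2_sq W c)"
    by (rule nn_integral_weighted_conv3_sq_le) (use W_pos W_add3 a b c in auto)
  then have "(\<integral>\<^sup>+\<xi>. ennreal (hs_weight \<gamma> \<xi>) * (conv3 a b c \<xi>)\<^sup>2 \<partial>count_space UNIV)
      \<le> ennreal (9 * (3 powr \<gamma>)\<^sup>2) * (ennreal S)\<^sup>2 * (weighted_l2_sq W a * weighted_l2_sq W b * weighted_l2_sq W c)"
    unfolding W_sq S .
  also have "ennreal (9 * (3 powr \<gamma>)\<^sup>2) * (ennreal S)\<^sup>2 = ennreal ((3 * 3 powr \<gamma> * S)\<^sup>2)"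
    using infsum_nonneg[of UNIV "\<lambda>x::int^'d. bracket_sq x powr (-\<gamma>)"] unfolding S_def
    by (simp add: ennreal_power ennreal_mult'[symmetric] power_mult_distrib)
  finally show ?thesis
    unfolding l2 S_def by (simp add: mult.assoc)
qed

section \<open>Time traces\<close>

text \<open>A bound holding almost everywhere on \<open>(0,T)\<close> holds everywhere on \<open>[0,T]\<close> for a continuous
  function: otherwise it fails on a nonempty open interval, which has positive measure.\<close>
lemma continuous_AE_le_imp_le:
  fixes g :: "real \<Rightarrow> real"
  assumes "0 < T" and g: "continuous_on {0..T} g"
    and AE: "AE t in restrict_space lborel {0<..<T}. g t \<le> B" and t0: "t0 \<in> {0..T}"
  shows "g t0 \<le> B"
proof (rule ccontr)
  assume "\<not> g t0 \<le> B"
  with g t0 obtain \<delta> where "0 < \<delta>"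
    and \<delta>: "\<And>t. t \<in> {0..T} \<Longrightarrow> dist t t0 < \<delta> \<Longrightarrow> dist (g t) (g t0) < g t0 - B"
    unfolding continuous_on_iff by (metis diff_gt_0_iff_gt linorder_not_le)
  define l u where "l = max 0 (t0 - \<delta>)" and "u = min T (t0 + \<delta>)"
  have "l < u" using t0 \<open>0 < \<delta>\<close> \<open>0 < T\<close> unfolding l_def u_def by auto
  have gt_B: "B < g t" if "t \<in> {l<..<u}" for t
  proof -
    have "t \<in> {0..T}" "dist t t0 < \<delta>"
      using that unfolding l_def u_def dist_real_def by auto
    from \<delta>[OF this] show ?thesis
      unfolding dist_real_def by auto
  qed
  have sub: "{l<..<u} \<subseteq> {0<..<T}"
    unfolding l_def u_def by auto
  have "AE t in lborel. t \<in> {0<..<T} \<longrightarrow> g t \<le> B"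
    using AE by (subst (asm) AE_restrict_space_iff) auto
  then have "AE t in lborel. t \<notin> {l<..<u}"
    by eventually_elim (use sub gt_B in force)
  then have "{l<..<u} \<in> null_sets lborel"
    by (subst AE_iff_null_sets) auto
  then have "emeasure lborel {l<..<u} = 0"
    by auto
  with \<open>l < u\<close> show False
    by simp
qed

lemma Linf_norm_nonneg:
  assumes "0 < T"
  shows "0 \<le> Linf_norm T s v"
proof -
  define M where "M = restrict_space lborel {0<..<T}"
  have "emeasure M (space M) \<noteq> 0"
    unfolding M_def using assms by (simp add: emeasure_restrict_space space_restrict_space)
  then have "ereal 0 \<le> esssup M (\<lambda>t. ereal (hs_norm s (v t)))"
    using esssup_mono[of "\<lambda>t. ereal 0" M "\<lambda>t. ereal (hs_norm s (v t))"]
    by (simp add: esssup_const hs_norm_nonneg)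
  then show ?thesis
    unfolding Linf_norm_def M_def by (intro real_of_ereal_pos) (simp add: zero_ereal_def)
qed

text \<open>Pointwise in time, the \<open>L\<^sup>\<infinity>(0,T;H\<^sup>s)\<close> bound survives for coefficientwise continuous \<open>v\<close>:
  each finite partial sum of the \<open>H\<^sup>s\<close> series is continuous in \<open>t\<close> and bounded a.e.\<close>
lemma hs_norm_le_Linf_norm:
  fixes v :: "real \<Rightarrow> int^'d \<Rightarrow> complex"
  assumes "0 < T" and cont: "\<And>\<xi>. continuous_on {0..T} (\<lambda>t. v t \<xi>)"
    and mem: "Linf_mem T s v" and t0: "t0 \<in> {0..T}"
  shows "in_Hs s (v t0) \<and> hs_norm s (v t0) \<le> Linf_norm T s v"
proof (rule in_Hs_hs_norm_le_if_sums_le[OF Linf_norm_nonneg[OF assms(1)]])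
  fix F :: "(int^'d) set"
  assume "finite F"
  define M where "M = restrict_space lborel {0<..<T}"
  define E where "E = esssup M (\<lambda>t. ereal (hs_norm s (v t)))"
  have E: "E < \<infinity>"
    using mem unfolding Linf_mem_def E_def M_def by simp
  have "AE t in M. in_Hs s (v t)"
    using mem unfolding Linf_mem_def M_def by simp
  moreover have "AE t in M. ereal (hs_norm s (v t)) \<le> E"
    unfolding E_def by (rule esssup_AE)
  ultimately have "AE t in M. (2*pi)^CARD('d) * (\<Sum>\<xi>\<in>F. hs_weight s \<xi> * (cmod (v t \<xi>))\<^sup>2) \<le> (Linf_norm T s v)\<^sup>2"
  proof eventually_elim
    case (elim t)
    then have "hs_norm s (v t) \<le> Linf_norm T s v"
      unfolding Linf_norm_def E_def[symmetric] M_def[symmetric] using E by (cases E) auto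
    then have "(hs_norm s (v t))\<^sup>2 \<le> (Linf_norm T s v)\<^sup>2"
      by (simp add: power_mono hs_norm_nonneg)
    with sum_le_hs_norm_sq[OF elim(1) \<open>finite F\<close>] show ?case
      by linarith
  qed
  moreover have "continuous_on {0..T} (\<lambda>t. (2*pi)^CARD('d) * (\<Sum>\<xi>\<in>F. hs_weight s \<xi> * (cmod (v t \<xi>))\<^sup>2))"
    by (intro continuous_intros cont)
  ultimately show "(2*pi)^CARD('d) * (\<Sum>\<xi>\<in>F. hs_weight s \<xi> * (cmod (v t0 \<xi>))\<^sup>2) \<le> (Linf_norm T s v)\<^sup>2"
    using continuous_AE_le_imp_le[OF assms(1) _ _ t0] unfolding M_def by blast
qed

lemma continuous_on_nls_solution:
  assumes "nls_solution T u"
  shows "continuous_on {0..T} (\<lambda>t. u t \<xi>)"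
  using assms unfolding nls_solution_def continuous_on_eq_continuous_within
  by (metis has_vector_derivative_continuous)

section \<open>The remainder \<open>R\<^sub>5\<close>\<close>

lemma ennreal_norm_R5_le:
  fixes v :: "real \<Rightarrow> int^'d \<Rightarrow> complex" and n :: nat
  assumes \<tau>: "0 < \<tau>"
  defines "c \<equiv> v (real n * \<tau>)"
  shows "ennreal (cmod (R5 \<tau> n v \<xi>))
           \<le> ennreal (18 * \<tau>^3) * conv3 (\<lambda>x. bracket_sq x * cmod (conj_coeff c x))
                (\<lambda>x. bracket_sq x * cmod (c x)) (\<lambda>x. bracket_sq x * cmod (c x)) \<xi>"
proof -
  define a b where "a x = bracket_sq x * cmod (c x)" and "b x = bracket_sq x * cmod (conj_coeff c x)" for x
  have a_nonneg: "0 \<le> a x" and b_nonneg: "0 \<le> b x" for x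
    unfolding a_def b_def using bracket_sq_pos[of x] by simp_all
  have summand_le: "cmod (R2 \<alpha> (real_of_int (2 * idot p q + 2 * idot p r + 2 * idot q r)) \<tau>
      * exp (\<i> * of_real \<theta>) * conj_coeff c p * c q * c r) \<le> 18 * \<tau>^3 * (b p * a q * a r)" for \<alpha> \<theta> p q r
    using mult_right_mono[OF norm_R2_beta_le[OF \<tau>, of \<alpha> p q r],
        of "cmod (conj_coeff c p) * cmod (c q) * cmod (c r)"]
    unfolding a_def b_def by (simp add: norm_mult mult_ac)
  have "ennreal (cmod (R5 \<tau> n v \<xi>))
      \<le> (\<integral>\<^sup>+z. ennreal (cmod (case z of (p, q) \<Rightarrow> let r = \<xi> - p - q; tn = real n * \<tau>;
            \<phi>3 = nsq \<xi> + nsq p - nsq q - nsq r; \<alpha> = 2 * nsq p;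
            \<beta> = 2 * idot p q + 2 * idot p r + 2 * idot q r
          in R2 (real_of_int \<alpha>) (real_of_int \<beta>) \<tau> * exp (\<i> * of_real (tn * real_of_int \<phi>3))
            * conj_coeff (v tn) p * v tn q * v tn r)) \<partial>count_space UNIV)"
    unfolding R5_def by (rule ennreal_norm_infsum_le_nn_integral)
  also have "\<dots> \<le> (\<integral>\<^sup>+z. ennreal (18 * \<tau>^3 * (b (fst z) * a (snd z) * a (\<xi> - fst z - snd z))) \<partial>count_space UNIV)"
    by (intro nn_integral_mono ennreal_leI) (simp only: split_beta Let_def c_def[symmetric] summand_le)
  also have "\<dots> = ennreal (18 * \<tau>^3) * conv3 b a a \<xi>"
    unfolding conv3_def using \<tau> a_nonneg b_nonneg
    by (simp add: nn_integral_cmult[symmetric] ennreal_mult[symmetric])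
  finally show ?thesis
    unfolding a_def b_def .
qed

lemma nn_integral_hs_weight_R5_le:
  fixes v :: "real \<Rightarrow> int^'d \<Rightarrow> complex" and n :: nat
  assumes \<gamma>: "real CARD('d) / 2 < \<gamma>" and \<tau>: "0 < \<tau>" and c: "in_Hs (\<gamma> + 2) (v (real n * \<tau>))"
  shows "(\<integral>\<^sup>+\<xi>. ennreal (hs_weight \<gamma> \<xi> * (cmod (R5 \<tau> n v \<xi>))\<^sup>2) \<partial>count_space UNIV)
           \<le> ennreal ((54 * 3 powr \<gamma> * (\<Sum>\<^sub>\<infinity>x::int^'d. bracket_sq x powr (-\<gamma>)) * \<tau>^3)\<^sup>2
                      * ((hs_norm (\<gamma> + 2) (v (real n * \<tau>)))\<^sup>2 / (2*pi)^CARD('d))^3)"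
proof -
  define c where "c = v (real n * \<tau>)"
  define a b where "a x = bracket_sq x * cmod (c x)" and "b x = bracket_sq x * cmod (conj_coeff c x)"
    for x :: "int^'d"
  define K where "K = 3 * 3 powr \<gamma> * (\<Sum>\<^sub>\<infinity>x::int^'d. bracket_sq x powr (-\<gamma>))"
  define N where "N = (hs_norm (\<gamma> + 2) c)\<^sup>2 / (2*pi)^CARD('d)"
  have a_nonneg: "0 \<le> a x" and b_nonneg: "0 \<le> b x" for x
    unfolding a_def b_def using bracket_sq_pos[of x] by simp_all
  have pointwise: "ennreal (hs_weight \<gamma> \<xi> * (cmod (R5 \<tau> n v \<xi>))\<^sup>2)
      \<le> ennreal ((18 * \<tau>^3)\<^sup>2) * (ennreal (hs_weight \<gamma> \<xi>) * (conv3 b a a \<xi>)\<^sup>2)" for \<xi>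
  proof -
    have "ennreal ((cmod (R5 \<tau> n v \<xi>))\<^sup>2) \<le> (ennreal (18 * \<tau>^3) * conv3 b a a \<xi>)\<^sup>2"
      using ennreal_norm_R5_le[OF \<tau>, where v = v and n = n and \<xi> = \<xi>] unfolding a_def b_def c_def
      by (simp add: ennreal_power[symmetric] power_mono)
    then show ?thesis
      using \<tau> by (simp add: ennreal_mult' ennreal_power power_mult_distrib hs_weight_nonneg mult_left_mono mult_ac)
  qed
  have "(\<integral>\<^sup>+\<xi>. ennreal (hs_weight \<gamma> \<xi> * (cmod (R5 \<tau> n v \<xi>))\<^sup>2) \<partial>count_space UNIV)
      \<le> (\<integral>\<^sup>+\<xi>. ennreal ((18 * \<tau>^3)\<^sup>2) * (ennreal (hs_weight \<gamma> \<xi>) * (conv3 b a a \<xi>)\<^sup>2) \<partial>count_space UNIV)"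
    by (intro nn_integral_mono pointwise)
  also have "\<dots> = ennreal ((18 * \<tau>^3)\<^sup>2) * (\<integral>\<^sup>+\<xi>. ennreal (hs_weight \<gamma> \<xi>) * (conv3 b a a \<xi>)\<^sup>2 \<partial>count_space UNIV)"
    by (rule nn_integral_cmult) simp
  also have "\<dots> \<le> ennreal ((18 * \<tau>^3)\<^sup>2) * (ennreal (K\<^sup>2) * (ennreal N * ennreal N * ennreal N))"
  proof (rule mult_left_mono)
    have "(\<integral>\<^sup>+x. ennreal (hs_weight \<gamma> x * (a x)\<^sup>2) \<partial>count_space UNIV) = ennreal N"
      unfolding a_def N_def using c[folded c_def] by (rule nn_integral_hs_weight_bracket_sq_mult)
    moreover have "(\<integral>\<^sup>+x. ennreal (hs_weight \<gamma> x * (b x)\<^sup>2) \<partial>count_space UNIV) = ennreal N"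
      unfolding b_def N_def using c[folded c_def] by (simp add: nn_integral_hs_weight_bracket_sq_mult)
    moreover have "(\<integral>\<^sup>+\<xi>. ennreal (hs_weight \<gamma> \<xi>) * (conv3 b a a \<xi>)\<^sup>2 \<partial>count_space UNIV)
        \<le> ennreal (K\<^sup>2) * ((\<integral>\<^sup>+x. ennreal (hs_weight \<gamma> x * (b x)\<^sup>2) \<partial>count_space UNIV)
          * (\<integral>\<^sup>+x. ennreal (hs_weight \<gamma> x * (a x)\<^sup>2) \<partial>count_space UNIV)
          * (\<integral>\<^sup>+x. ennreal (hs_weight \<gamma> x * (a x)\<^sup>2) \<partial>count_space UNIV))"
      unfolding K_def by (rule nn_integral_hs_weight_conv3_sq_le[OF \<gamma>]) (use a_nonneg b_nonneg in auto)
    ultimately show "(\<integral>\<^sup>+\<xi>. ennreal (hs_weight \<gamma> \<xi>) * (conv3 b a a \<xi>)\<^sup>2 \<partial>count_space UNIV)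
        \<le> ennreal (K\<^sup>2) * (ennreal N * ennreal N * ennreal N)"
      by simp
  qed simp
  also have "\<dots> = ennreal ((54 * 3 powr \<gamma> * (\<Sum>\<^sub>\<infinity>x::int^'d. bracket_sq x powr (-\<gamma>)) * \<tau>^3)\<^sup>2 * N^3)"
    using infsum_nonneg[of UNIV "\<lambda>x::int^'d. bracket_sq x powr (-\<gamma>)"] unfolding K_def N_def
    by (simp add: ennreal_power ennreal_mult'[symmetric] power_mult_distrib power3_eq_cube mult_ac)
  finally show ?thesis
    unfolding N_def c_def .
qed

lemma hs_norm_R5_le:
  fixes v :: "real \<Rightarrow> int^'d \<Rightarrow> complex" and n :: nat
  assumes "real CARD('d) / 2 < \<gamma>" and "0 < \<tau>" and "in_Hs (\<gamma> + 2) (v (real n * \<tau>))"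
  shows "in_Hs \<gamma> (R5 \<tau> n v)
         \<and> hs_norm \<gamma> (R5 \<tau> n v) \<le> 54 * 3 powr \<gamma> * (\<Sum>\<^sub>\<infinity>x::int^'d. bracket_sq x powr (-\<gamma>)) / (2*pi)^CARD('d)
                                  * \<tau>^3 * (hs_norm (\<gamma> + 2) (v (real n * \<tau>)))^3"
proof -
  define K where "K = 54 * 3 powr \<gamma> * (\<Sum>\<^sub>\<infinity>x::int^'d. bracket_sq x powr (-\<gamma>))"
  define H where "H = hs_norm (\<gamma> + 2) (v (real n * \<tau>))"
  define P where "P = (2*pi)^CARD('d)"
  have "0 \<le> K" unfolding K_def by (simp add: infsum_nonneg)
  have "0 \<le> H" unfolding H_def by (rule hs_norm_nonneg)
  have "0 < P" unfolding P_def by simp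
  have "in_Hs \<gamma> (R5 \<tau> n v) \<and> hs_norm \<gamma> (R5 \<tau> n v) \<le> sqrt (P * ((K * \<tau>^3)\<^sup>2 * (H\<^sup>2 / P)^3))"
    using in_Hs_hs_norm_le_if_nn_integral_le[OF nn_integral_hs_weight_R5_le[where v = v and n = n, OF assms]] \<open>0 < P\<close>
    unfolding K_def H_def P_def by simp
  moreover have "P * ((K * \<tau>^3)\<^sup>2 * (H\<^sup>2 / P)^3) = (K / P * \<tau>^3 * H^3)\<^sup>2"
    using \<open>0 < P\<close> by (simp add: field_simps power_mult_distrib eval_nat_numeral)
  ultimately show ?thesis
    using \<open>0 \<le> K\<close> \<open>0 \<le> H\<close> \<open>0 < P\<close> \<open>0 < \<tau>\<close> unfolding K_def H_def P_def by simp
qed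

theorem lemma3p3:
  fixes \<gamma> :: real
  assumes "\<gamma> > real CARD('d) / 2"
  shows "\<exists>C. \<forall>(T::real) (u :: real \<Rightarrow> int^'d \<Rightarrow> complex) v (\<tau>::real) (n::nat).
           T > 0 \<and> \<tau> > 0 \<and> real n * \<tau> \<le> T \<and> nls_solution T u \<and>
           v = (\<lambda>t \<xi>. exp (\<i> * of_real (t * real_of_int (nsq \<xi>))) * u t \<xi>) \<and>
           Linf_mem T (\<gamma> + 2) v
           \<longrightarrow> in_Hs \<gamma> (R5 \<tau> n v) \<and>
               hs_norm \<gamma> (R5 \<tau> n v) \<le> C * \<tau>^3 * (Linf_norm T (\<gamma> + 2) v)^3"
proof (intro exI allI impI conjI; elim conjE)
  define C where "C = 54 * 3 powr \<gamma> * (\<Sum>\<^sub>\<infinity>x::int^'d. bracket_sq x powr (-\<gamma>)) / (2*pi)^CARD('d)"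
  fix T \<tau> :: real and u v :: "real \<Rightarrow> int^'d \<Rightarrow> complex" and n :: nat
  assume "0 < T" "0 < \<tau>" "real n * \<tau> \<le> T" and u: "nls_solution T u"
    and v: "v = (\<lambda>t \<xi>. exp (\<i> * of_real (t * real_of_int (nsq \<xi>))) * u t \<xi>)" and mem: "Linf_mem T (\<gamma> + 2) v"
  have "continuous_on {0..T} (\<lambda>t. v t \<xi>)" for \<xi>
    unfolding v by (intro continuous_intros continuous_on_nls_solution[OF u])
  with \<open>0 < T\<close> mem have trace: "in_Hs (\<gamma> + 2) (v (real n * \<tau>))"
    "hs_norm (\<gamma> + 2) (v (real n * \<tau>)) \<le> Linf_norm T (\<gamma> + 2) v"
    using hs_norm_le_Linf_norm[of T v "\<gamma> + 2" "real n * \<tau>"] \<open>0 < \<tau>\<close> \<open>real n * \<tau> \<le> T\<close> by auto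
  note R5 = hs_norm_R5_le[where v = v and n = n, OF assms \<open>0 < \<tau>\<close> trace(1), folded C_def]
  then show "in_Hs \<gamma> (R5 \<tau> n v)"
    by simp
  have "0 \<le> C * \<tau>^3"
    unfolding C_def using \<open>0 < \<tau>\<close> by (simp add: infsum_nonneg)
  then have "C * \<tau>^3 * (hs_norm (\<gamma> + 2) (v (real n * \<tau>)))^3 \<le> C * \<tau>^3 * (Linf_norm T (\<gamma> + 2) v)^3"
    using trace(2) by (intro mult_left_mono power_mono hs_norm_nonneg)
  with R5 show "hs_norm \<gamma> (R5 \<tau> n v) \<le> C * \<tau>^3 * (Linf_norm T (\<gamma> + 2) v)^3"
    by simp
qed

end
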